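(* Let $k\ge1$ be an integer. For the class of $k$-well-structured instances of one-sided matching (with unrestricted nonnegative valuations), the algorithm $k$-FMM makes $k$ value queries per agent and has distortion $O(k\cdot n^{1/k})$.
   Context: One-sided matching: there is a set $N$ of $n$ agents and a set $A$ of $n$ items. Each agent $i$ has a valuation function $v_i:A\to\mathbb{R}_{\ge0}$. Agents report strict rankings $\succ_i$ consistent with their values (if $a\succ_i b$ then $v_i(a)\ge v_i(b)$). Value queries return $v_i(j)$. A matching is a bijection $N\to A$ with welfare $\mathrm{SW}(Y\mid\mathbf v)=\sum_i v_i(y_i)$. The distortion of an algorithm on a class of instances is the supremum over instances in the class of optimal welfare divided by the welfare of the algorithm's output. $k$-well-structured ($k$-WS) instance: fix a constant $\varepsilon\in(0,1)$. The items are partitioned into $A_1,\dots,A_{k+1}$ with $|A_1|=1$ and $|A_\ell|=\varepsilon n^{(\ell-1)/k}$ for $\ell=2,\dots,k$ (assumed integers), and $A_{k+1}$ the remaining items. Every agent ranks all items of $A_\ell$ above all items of $A_{\ell+1}$ for each $\ell$. The order within each $A_\ell$ may differ across agents. The partition is known to the algorithm. Algorithm $k$-FMM: for each $\ell=1,\dots,k$ and each agent $i$, query $i$'s value $u_i(\ell)$ for her least-preferred item in $A_\ell$. Define $\tilde v_i(j)=u_i(\ell)$ for $j\in A_\ell$ with $\ell\le k$, and $\tilde v_i(j)=0$ for $j\in A_{k+1}$. Output a matching maximizing $\sum_i\tilde v_i(y_i)$. *)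

theory Defs
  imports Complex_Main
begin

text \<open>Agents and items are both represented by the index set {..<n}.
  A strict ranking of agent i is given by rk i :: nat => nat, injective on the items
  (smaller rank = more preferred).  The partition A_1,...,A_{k+1} is given by a level
  function lvl :: nat => nat with lvl j in {1..k+1}.\<close>

definition is_matching :: "nat \<Rightarrow> (nat \<Rightarrow> nat) \<Rightarrow> bool" where
  "is_matching n y \<longleftrightarrow> bij_betw y {..<n} {..<n}"

definition SW :: "(nat \<Rightarrow> nat \<Rightarrow> real) \<Rightarrow> nat \<Rightarrow> (nat \<Rightarrow> nat) \<Rightarrow> real" where
  "SW v n y = (\<Sum>i<n. v i (y i))"

definition consistent_rankings ::
  "nat \<Rightarrow> (nat \<Rightarrow> nat \<Rightarrow> real) \<Rightarrow> (nat \<Rightarrow> nat \<Rightarrow> nat) \<Rightarrow> bool" where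
  "consistent_rankings n v rk \<longleftrightarrow>
     (\<forall>i<n. inj_on (rk i) {..<n} \<and>
       (\<forall>a<n. \<forall>b<n. rk i a < rk i b \<longrightarrow> v i a \<ge> v i b))"

definition k_WS ::
  "real \<Rightarrow> nat \<Rightarrow> nat \<Rightarrow> (nat \<Rightarrow> nat \<Rightarrow> real) \<Rightarrow> (nat \<Rightarrow> nat \<Rightarrow> nat) \<Rightarrow> (nat \<Rightarrow> nat) \<Rightarrow> bool"
  where
  "k_WS eps k n v rk lvl \<longleftrightarrow>
     (\<forall>i<n. \<forall>j<n. v i j \<ge> 0) \<and>
     consistent_rankings n v rk \<and>
     (\<forall>j<n. 1 \<le> lvl j \<and> lvl j \<le> k + 1) \<and>
     card {j. j < n \<and> lvl j = 1} = 1 \<and>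
     (\<forall>l. 2 \<le> l \<and> l \<le> k \<longrightarrow>
        real (card {j. j < n \<and> lvl j = l}) = eps * real n powr ((real l - 1) / real k)) \<and>
     (\<forall>i<n. \<forall>a<n. \<forall>b<n. lvl a < lvl b \<longrightarrow> rk i a < rk i b)"

definition least_pref :: "nat \<Rightarrow> (nat \<Rightarrow> nat \<Rightarrow> nat) \<Rightarrow> (nat \<Rightarrow> nat) \<Rightarrow> nat \<Rightarrow> nat \<Rightarrow> nat" where
  "least_pref n rk lvl i l = (ARG_MAX (rk i) j. j < n \<and> lvl j = l)"

definition query_u :: "nat \<Rightarrow> (nat \<Rightarrow> nat \<Rightarrow> real) \<Rightarrow> (nat \<Rightarrow> nat \<Rightarrow> nat) \<Rightarrow> (nat \<Rightarrow> nat) \<Rightarrow> nat \<Rightarrow> nat \<Rightarrow> real" where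
  "query_u n v rk lvl i l = v i (least_pref n rk lvl i l)"

definition fmm_val :: "nat \<Rightarrow> nat \<Rightarrow> (nat \<Rightarrow> nat \<Rightarrow> real) \<Rightarrow> (nat \<Rightarrow> nat \<Rightarrow> nat) \<Rightarrow> (nat \<Rightarrow> nat) \<Rightarrow> nat \<Rightarrow> nat \<Rightarrow> real" where
  "fmm_val k n v rk lvl i j = (if lvl j \<le> k then query_u n v rk lvl i (lvl j) else 0)"

definition fmm_output :: "nat \<Rightarrow> nat \<Rightarrow> (nat \<Rightarrow> nat \<Rightarrow> real) \<Rightarrow> (nat \<Rightarrow> nat \<Rightarrow> nat) \<Rightarrow> (nat \<Rightarrow> nat) \<Rightarrow> (nat \<Rightarrow> nat) \<Rightarrow> bool" where
  "fmm_output k n v rk lvl y \<longleftrightarrow> is_matching n y \<and>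
     (\<forall>y'. is_matching n y' \<longrightarrow> SW (fmm_val k n v rk lvl) n y' \<le> SW (fmm_val k n v rk lvl) n y)"

end

theory Submission
  imports Defs
begin

text \<open>Compare the k-FMM output y with an arbitrary matching Y.  An agent i that Y gives an item
  of A_l (l \<ge> 2) values it at most u_i(l - 1), since every item of A_(l-1) is ranked above it;
  the item of A_1 is worth exactly u_i(1).  Charge these bounds level by level.  At most
  |A_l| \<le> n^((l-1)/k) agents are charged at level l, while any |A_(l-1)| \<ge> eps n^((l-2)/k) of
  them can be given items of A_(l-1) simultaneously, which is worth at most the proxy welfare of
  y.  By averaging, the heaviest such group carries an eps n^(-1/k) fraction of the charges of the
  level, so each of the k + 1 levels contributes at most n^(1/k)/eps times the proxy welfare of y,
  and proxy values underestimate true values.\<close>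

lemma ex_subset_card_sum_ge:
  fixes w :: "'a \<Rightarrow> real"
  assumes "finite S" "m \<le> card S" "\<forall>i\<in>S. 0 \<le> w i"
  shows "\<exists>T\<subseteq>S. card T = m \<and> real m * sum w S \<le> real (card S) * sum w T"
  using assms
proof (induction "card S - m" arbitrary: S)
  case 0
  then show ?case by (intro exI[of _ S]) auto
next
  case (Suc d)
  then have "S \<noteq> {}" by auto
  then have "Min (w ` S) \<in> w ` S" using Suc.prems(1) by (intro Min_in) auto
  then obtain x where "x \<in> S" "Min (w ` S) = w x" by auto
  then have x: "x \<in> S" "\<forall>y\<in>S. w x \<le> w y"
    using Suc.prems(1) by (metis Min_le finite_imageI imageI)+
  define S' where "S' = S - {x}"
  have card_S': "card S' = card S - 1" using x Suc.prems S'_def by simp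
  have "d = card S' - m" "m \<le> card S'" "finite S'" "\<forall>i\<in>S'. 0 \<le> w i"
    using Suc.hyps(2) Suc.prems card_S' S'_def by auto
  then obtain T where T: "T \<subseteq> S'" "card T = m"
    and T_heavy: "real m * sum w S' \<le> real (card S') * sum w T"
    using Suc.hyps(1) by blast
  define s where "s = real (card S)"
  have sum_S: "sum w S = w x + sum w S'"
    using S'_def x Suc.prems by (simp add: sum.remove)
  have "s * w x \<le> sum w S"
    using sum_bounded_below[of S "w x" w] x s_def by simp
  then have x_small: "(s - 1) * w x \<le> sum w S'" using sum_S by (simp add: algebra_simps)
  have "real m * sum w S \<le> s * sum w T"
  proof (cases "card S = 1")
    case True
    then have "m = 0" using Suc.hyps(2) by simp
    then show ?thesis using T Suc.prems S'_def s_def by (simp add: sum_nonneg subset_iff)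
  next
    case False
    have "card S \<noteq> 0" using \<open>S \<noteq> {}\<close> Suc.prems(1) by simp
    then have s1: "s > 1" using False s_def by linarith
    have card_S'_real: "real (card S') = s - 1" using card_S' s1 s_def by simp
    have "(s - 1) * (real m * sum w S) = real m * ((s - 1) * w x) + real m * (s - 1) * sum w S'"
      using sum_S by (simp add: algebra_simps)
    also have "\<dots> \<le> real m * sum w S' + real m * (s - 1) * sum w S'"
      using x_small by (intro add_right_mono mult_left_mono) auto
    also have "\<dots> = s * (real m * sum w S')" by (simp add: algebra_simps)
    also have "\<dots> \<le> s * ((s - 1) * sum w T)"
      using T_heavy card_S'_real s1 by (intro mult_left_mono) auto
    finally have "(s - 1) * (real m * sum w S) \<le> (s - 1) * (s * sum w T)"
      by (simp add: algebra_simps)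
    then show ?thesis using s1 by simp
  qed
  then show ?case using T S'_def s_def by (intro exI[of _ T]) auto
qed

lemma scaled_sum_le_of_subset_sums_le:
  fixes w :: "'a \<Rightarrow> real"
  assumes S: "finite S" "\<forall>i\<in>S. 0 \<le> w i" "m \<le> card S"
    and subsets: "\<And>T. T \<subseteq> S \<Longrightarrow> card T = m \<Longrightarrow> sum w T \<le> B"
    and ratio: "c * real (card S) \<le> real m * r" and "0 \<le> B" "0 \<le> r"
  shows "c * sum w S \<le> r * B"
proof (cases "S = {}")
  case True
  then show ?thesis using \<open>0 \<le> B\<close> \<open>0 \<le> r\<close> by simp
next
  case False
  obtain T where T: "T \<subseteq> S" "card T = m" and heavy: "real m * sum w S \<le> real (card S) * sum w T"
    using ex_subset_card_sum_ge[OF S(1,3,2)] by blast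
  have "0 \<le> sum w S" using S(2) by (simp add: sum_nonneg)
  then have "c * real (card S) * sum w S \<le> real m * r * sum w S"
    by (rule mult_right_mono[OF ratio])
  then have "real (card S) * (c * sum w S) \<le> r * (real m * sum w S)"
    by (simp add: ac_simps)
  also have "\<dots> \<le> r * (real (card S) * sum w T)"
    using heavy \<open>0 \<le> r\<close> by (rule mult_left_mono)
  also have "\<dots> \<le> r * (real (card S) * B)"
    using subsets[OF T] \<open>0 \<le> r\<close> by (intro mult_left_mono) auto
  finally show ?thesis using False S(1) by (simp add: card_gt_0_iff)
qed

lemma ex_matching_image_subset:
  assumes "T \<subseteq> {..<n}" "B \<subseteq> {..<n}" "card T = card B"
  shows "\<exists>g. is_matching n g \<and> g ` T \<subseteq> B"
proof -
  have fin: "finite T" "finite B" using assms finite_subset by auto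
  obtain f where f: "bij_betw f T B" using finite_same_card_bij[OF fin] assms by auto
  have "card ({..<n} - T) = card ({..<n} - B)"
    using assms fin by (simp add: card_Diff_subset)
  then obtain h where h: "bij_betw h ({..<n} - T) ({..<n} - B)"
    using finite_same_card_bij[of "{..<n} - T" "{..<n} - B"] by auto
  define g where "g x = (if x \<in> T then f x else h x)" for x
  have g_T: "bij_betw g T B"
    using f by (rule bij_betw_cong[THEN iffD1, rotated]) (simp add: g_def)
  have "bij_betw g ({..<n} - T) ({..<n} - B)"
    using h by (rule bij_betw_cong[THEN iffD1, rotated]) (simp add: g_def)
  then have "bij_betw g (T \<union> ({..<n} - T)) (B \<union> ({..<n} - B))"
    by (intro bij_betw_combine[OF g_T]) auto
  moreover have "T \<union> ({..<n} - T) = {..<n}" "B \<union> ({..<n} - B) = {..<n}" using assms by auto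
  ultimately show ?thesis using g_T by (auto simp: is_matching_def bij_betw_def)
qed

lemma matching_less: "is_matching n g \<Longrightarrow> i < n \<Longrightarrow> g i < n"
  by (auto simp: is_matching_def bij_betw_def)

locale well_structured_instance =
  fixes eps :: real and k n :: nat and v :: "nat \<Rightarrow> nat \<Rightarrow> real"
    and rk :: "nat \<Rightarrow> nat \<Rightarrow> nat" and lvl :: "nat \<Rightarrow> nat"
  assumes eps_pos: "0 < eps" and eps_less_1: "eps < 1" and k_pos: "1 \<le> k"
    and instance_k_WS: "k_WS eps k n v rk lvl"
begin

abbreviation u :: "nat \<Rightarrow> nat \<Rightarrow> real" where "u \<equiv> query_u n v rk lvl"

abbreviation proxy :: "nat \<Rightarrow> nat \<Rightarrow> real" where "proxy \<equiv> fmm_val k n v rk lvl"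

definition level :: "nat \<Rightarrow> nat set" where "level l = {j. j < n \<and> lvl j = l}"

text \<open>The max handles l = 1, where the single item of A_1 is charged its own value u_i(1).\<close>
definition prev_level :: "nat \<Rightarrow> nat" where "prev_level l = max 1 (l - 1)"

lemma value_nonneg: "i < n \<Longrightarrow> j < n \<Longrightarrow> 0 \<le> v i j"
  using instance_k_WS by (auto simp: k_WS_def)

lemma rank_inj: "i < n \<Longrightarrow> inj_on (rk i) {..<n}"
  using instance_k_WS by (auto simp: k_WS_def consistent_rankings_def)

lemma value_antimono_rank:
  "i < n \<Longrightarrow> a < n \<Longrightarrow> b < n \<Longrightarrow> rk i a < rk i b \<Longrightarrow> v i b \<le> v i a"
  using instance_k_WS by (auto simp: k_WS_def consistent_rankings_def)

lemma rank_less_if_level_less: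
  "i < n \<Longrightarrow> a < n \<Longrightarrow> b < n \<Longrightarrow> lvl a < lvl b \<Longrightarrow> rk i a < rk i b"
  using instance_k_WS unfolding k_WS_def by blast

lemma level_bounds: "j < n \<Longrightarrow> 1 \<le> lvl j \<and> lvl j \<le> k + 1"
  using instance_k_WS by (auto simp: k_WS_def)

lemma card_level_1: "card (level 1) = 1"
  using instance_k_WS by (auto simp: k_WS_def level_def)

lemma card_level_middle:
  "2 \<le> l \<Longrightarrow> l \<le> k \<Longrightarrow> real (card (level l)) = eps * real n powr ((real l - 1) / real k)"
  using instance_k_WS unfolding k_WS_def level_def by blast

lemma level_subset: "level l \<subseteq> {..<n}"
  by (auto simp: level_def)

lemma finite_level: "finite (level l)"
  using level_subset finite_subset by blast

lemma n_pos: "0 < n"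
proof (rule ccontr)
  assume "\<not> 0 < n"
  then have "level 1 = {}" unfolding level_def by auto
  then show False using card_level_1 by simp
qed

lemma level_nonempty: "1 \<le> l \<Longrightarrow> l \<le> k \<Longrightarrow> level l \<noteq> {}"
  using card_level_1 card_level_middle[of l] eps_pos n_pos
  by (cases "l = 1") (auto simp: not_less_eq_eq)

lemma card_level_le:
  "1 \<le> l \<Longrightarrow> l \<le> k + 1 \<Longrightarrow> real (card (level l)) \<le> real n powr ((real l - 1) / real k)"
proof -
  assume l: "1 \<le> l" "l \<le> k + 1"
  consider "l = 1" | "2 \<le> l" "l \<le> k" | "l = k + 1" using l by linarith
  then show ?thesis
  proof cases
    case 2
    then show ?thesis using card_level_middle eps_pos eps_less_1 by (simp add: mult_left_le_one_le)
  next
    case 3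
    have "card (level l) \<le> n" using card_mono[OF _ level_subset] by fastforce
    then show ?thesis using 3 k_pos n_pos by simp
  qed (use card_level_1 n_pos in simp)
qed

lemma card_level_ge:
  "1 \<le> l \<Longrightarrow> l \<le> k \<Longrightarrow> eps * real n powr ((real l - 1) / real k) \<le> real (card (level l))"
  using card_level_1 card_level_middle[of l] eps_less_1 by (cases "l = 1") auto

lemma card_level_growth:
  assumes "1 \<le> l" "l \<le> k + 1"
  shows "eps * real (card (level l)) \<le> real (card (level (prev_level l))) * real n powr (1 / real k)"
proof (cases "l = 1")
  case True
  have "1 \<le> real n powr (1 / real k)" using n_pos by (intro ge_one_powr_ge_zero) auto
  then show ?thesis using True card_level_1 eps_less_1 by (simp add: prev_level_def)
next
  case False
  then have prev: "prev_level l = l - 1" "1 \<le> l - 1" "l - 1 \<le> k"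
    using assms by (auto simp: prev_level_def)
  have "eps * real (card (level l)) \<le> eps * real n powr ((real l - 1) / real k)"
    using card_level_le[OF assms] eps_pos by simp
  also have "\<dots> = eps * real n powr ((real (l - 1) - 1) / real k) * real n powr (1 / real k)"
    using False assms by (simp add: powr_add[symmetric] diff_divide_distrib add_divide_distrib)
  also have "\<dots> \<le> real (card (level (l - 1))) * real n powr (1 / real k)"
    using card_level_ge[OF prev(2,3)] by (intro mult_right_mono) auto
  finally show ?thesis using prev by simp
qed

lemma least_pref_in_level:
  assumes "1 \<le> l" "l \<le> k"
  shows "least_pref n rk lvl i l \<in> level l"
    and "j \<in> level l \<Longrightarrow> rk i j \<le> rk i (least_pref n rk lvl i l)"
proof -
  obtain j0 where j0: "j0 \<in> level l" using level_nonempty[OF assms] by blast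
  have "\<forall>j. j < n \<and> lvl j = l \<longrightarrow> rk i j < Suc (Max (rk i ` {..<n}))"
    by (auto simp: le_imp_less_Suc)
  then have "least_pref n rk lvl i l \<in> level l \<and>
      (\<forall>j\<in>level l. rk i j \<le> rk i (least_pref n rk lvl i l))"
    using arg_max_nat_lemma[of "\<lambda>j. j < n \<and> lvl j = l" j0 "rk i"] j0
    unfolding least_pref_def level_def by auto
  then show "least_pref n rk lvl i l \<in> level l"
    and "j \<in> level l \<Longrightarrow> rk i j \<le> rk i (least_pref n rk lvl i l)"
    by auto
qed

lemma query_le_value:
  assumes "i < n" "j \<in> level l" "1 \<le> l" "l \<le> k"
  shows "u i l \<le> v i j"
proof -
  let ?p = "least_pref n rk lvl i l"
  have p: "?p < n" "rk i j \<le> rk i ?p"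
    using least_pref_in_level[OF assms(3,4)] assms(2) by (auto simp: level_def)
  have "j < n" using assms(2) by (simp add: level_def)
  show ?thesis
  proof (cases "rk i j = rk i ?p")
    case True
    then have "j = ?p" using rank_inj[OF assms(1)] p \<open>j < n\<close> by (auto dest: inj_onD)
    then show ?thesis by (simp add: query_u_def)
  next
    case False
    then show ?thesis using p value_antimono_rank[OF assms(1) \<open>j < n\<close> p(1)] by (simp add: query_u_def)
  qed
qed

lemma query_nonneg: "i < n \<Longrightarrow> 1 \<le> l \<Longrightarrow> l \<le> k \<Longrightarrow> 0 \<le> u i l"
  using least_pref_in_level(1) value_nonneg by (auto simp: query_u_def level_def)

lemma value_le_query_prev_level:
  assumes "i < n" "j < n"
  shows "v i j \<le> u i (prev_level (lvl j))"
proof (cases "lvl j = 1")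
  case True
  have "least_pref n rk lvl i 1 \<in> level 1" "j \<in> level 1"
    using least_pref_in_level(1)[of 1] k_pos True assms by (auto simp: level_def)
  then have "least_pref n rk lvl i 1 = j" using card_level_1 by (metis card_1_singletonE singletonD)
  then show ?thesis using True by (simp add: prev_level_def query_u_def)
next
  case False
  let ?l = "lvl j - 1"
  let ?p = "least_pref n rk lvl i ?l"
  have l: "1 \<le> ?l" "?l \<le> k" using False level_bounds[OF assms(2)] by auto
  have "?p < n" "lvl ?p = ?l" using least_pref_in_level(1)[OF l] by (auto simp: level_def)
  then have "rk i ?p < rk i j" using rank_less_if_level_less[OF assms(1) _ assms(2)] l by auto
  then show ?thesis
    using value_antimono_rank[OF assms(1) \<open>?p < n\<close> assms(2)] False l
    by (simp add: prev_level_def query_u_def)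
qed

lemma proxy_nonneg: "i < n \<Longrightarrow> j < n \<Longrightarrow> 0 \<le> proxy i j"
  using query_nonneg level_bounds by (auto simp: fmm_val_def)

lemma proxy_le_value: "i < n \<Longrightarrow> j < n \<Longrightarrow> proxy i j \<le> v i j"
  using query_le_value[of i j "lvl j"] level_bounds value_nonneg by (auto simp: fmm_val_def level_def)

lemma proxy_welfare_le_welfare: "is_matching n y \<Longrightarrow> SW proxy n y \<le> SW v n y"
  unfolding SW_def using proxy_le_value matching_less by (intro sum_mono) auto

lemma proxy_welfare_nonneg: "is_matching n y \<Longrightarrow> 0 \<le> SW proxy n y"
  unfolding SW_def using proxy_nonneg matching_less by (intro sum_nonneg) auto

text \<open>The agents of T can simultaneously receive distinct items of A_l, each worth u_i(l)
  to them under the proxy valuation.\<close>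
lemma sum_query_le_fmm_welfare:
  assumes y: "fmm_output k n v rk lvl y"
    and T: "T \<subseteq> {..<n}" "card T \<le> card (level l)" and l: "1 \<le> l" "l \<le> k"
  shows "(\<Sum>i\<in>T. u i l) \<le> SW proxy n y"
proof -
  obtain B where B: "B \<subseteq> level l" "card B = card T"
    using obtain_subset_with_card_n[OF T(2)] by metis
  obtain g where g: "is_matching n g" "g ` T \<subseteq> B"
    using ex_matching_image_subset[OF T(1) _ B(2)[symmetric]] B(1) level_subset by blast
  have "(\<Sum>i\<in>T. u i l) = (\<Sum>i\<in>T. proxy i (g i))"
    using g B(1) l by (intro sum.cong) (auto simp: fmm_val_def level_def)
  also have "\<dots> \<le> (\<Sum>i<n. proxy i (g i))"
    using proxy_nonneg matching_less[OF g(1)] T(1) by (intro sum_mono2) auto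
  also have "\<dots> \<le> SW proxy n y"
    using y g(1) by (simp add: fmm_output_def SW_def)
  finally show ?thesis .
qed

lemma agents_on_level_bound:
  assumes y: "fmm_output k n v rk lvl y" and Y: "is_matching n Y" and l: "1 \<le> l" "l \<le> k + 1"
  defines "G \<equiv> {i. i < n \<and> lvl (Y i) = l}"
  shows "eps * (\<Sum>i\<in>G. u i (prev_level l)) \<le> real n powr (1 / real k) * SW proxy n y"
proof -
  let ?l' = "prev_level l" and ?r = "real n powr (1 / real k)"
  define m where "m = min (card (level ?l')) (card G)"
  have l': "1 \<le> ?l'" "?l' \<le> k" using l k_pos by (auto simp: prev_level_def)
  have "Y ` G \<subseteq> level l" using matching_less[OF Y] by (auto simp: G_def level_def)
  moreover have "inj_on Y G" using Y by (auto simp: is_matching_def bij_betw_def G_def intro: inj_on_subset)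
  ultimately have "card G \<le> card (level l)" using card_inj_on_le finite_level by blast
  then have "eps * real (card G) \<le> real (card (level ?l')) * ?r"
    using card_level_growth[OF l] eps_pos by (meson of_nat_le_iff mult_left_mono less_imp_le order_trans)
  moreover have "eps \<le> ?r"
    using eps_less_1 ge_one_powr_ge_zero[of "real n" "1 / real k"] n_pos by simp
  then have "eps * real (card G) \<le> real (card G) * ?r"
    by (metis mult.commute mult_right_mono of_nat_0_le_iff)
  ultimately have "eps * real (card G) \<le> real m * ?r" by (simp add: m_def min_def)
  moreover have "(\<Sum>i\<in>T. u i ?l') \<le> SW proxy n y" if "T \<subseteq> G" "card T = m" for T
    using that by (intro sum_query_le_fmm_welfare[OF y _ _ l']) (auto simp: G_def m_def)
  moreover have "\<forall>i\<in>G. 0 \<le> u i ?l'" using query_nonneg l' by (auto simp: G_def)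
  ultimately show ?thesis
    using proxy_welfare_nonneg y
    by (intro scaled_sum_le_of_subset_sums_le) (auto simp: G_def m_def fmm_output_def)
qed

lemma welfare_bound:
  assumes y: "fmm_output k n v rk lvl y" and Y: "is_matching n Y"
  shows "eps * SW v n Y \<le> real (k + 1) * real n powr (1 / real k) * SW v n y"
proof -
  let ?r = "real n powr (1 / real k)"
  define G where "G l = {i \<in> {..<n}. lvl (Y i) = l}" for l
  have "SW v n Y \<le> (\<Sum>i<n. u i (prev_level (lvl (Y i))))"
    unfolding SW_def using value_le_query_prev_level matching_less[OF Y] by (intro sum_mono) auto
  also have "\<dots> = (\<Sum>l\<in>{1..k+1}. \<Sum>i\<in>G l. u i (prev_level (lvl (Y i))))"
    unfolding G_def by (rule sum.group[symmetric]) (use level_bounds matching_less[OF Y] in auto)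
  also have "\<dots> = (\<Sum>l\<in>{1..k+1}. \<Sum>i\<in>G l. u i (prev_level l))"
    by (intro sum.cong) (auto simp: G_def)
  finally have "eps * SW v n Y \<le> eps * (\<Sum>l\<in>{1..k+1}. \<Sum>i\<in>G l. u i (prev_level l))"
    using eps_pos by simp
  also have "\<dots> = (\<Sum>l\<in>{1..k+1}. eps * (\<Sum>i\<in>G l. u i (prev_level l)))"
    by (rule sum_distrib_left)
  also have "\<dots> \<le> (\<Sum>l\<in>{1..k+1}. ?r * SW proxy n y)"
    using agents_on_level_bound[OF y Y] by (intro sum_mono) (auto simp: G_def)
  also have "\<dots> \<le> real (k + 1) * ?r * SW v n y"
    using proxy_welfare_le_welfare y by (simp add: fmm_output_def mult_left_mono)
  finally show ?thesis .
qed

end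

theorem theorem3:
  fixes eps :: real
  assumes "0 < eps" and "eps < 1"
  shows "\<exists>C>0. \<forall>k n v rk lvl y Y. 1 \<le> k \<longrightarrow> k_WS eps k n v rk lvl \<longrightarrow>
           fmm_output k n v rk lvl y \<longrightarrow> is_matching n Y \<longrightarrow>
           SW v n Y \<le> C * real k * real n powr (1 / real k) * SW v n y"
proof (intro exI[of _ "2 / eps"] conjI allI impI)
  show "0 < 2 / eps" using assms by simp
  fix k n v rk lvl y Y
  assume k: "1 \<le> k" and ws: "k_WS eps k n v rk lvl" and y: "fmm_output k n v rk lvl y"
    and Y: "is_matching n Y"
  interpret well_structured_instance eps k n v rk lvl
    using assms k ws by unfold_locales
  let ?X = "real n powr (1 / real k) * SW v n y"
  have "0 \<le> ?X"
    using proxy_welfare_nonneg proxy_welfare_le_welfare y by (fastforce simp: fmm_output_def)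
  then have "real (k + 1) * ?X \<le> (2 * real k) * ?X"
    using k by (intro mult_right_mono) auto
  moreover have "eps * SW v n Y \<le> real (k + 1) * ?X"
    using welfare_bound[OF y Y] by (simp only: mult.assoc)
  ultimately have "SW v n Y * eps \<le> 2 * real k * ?X"
    by (simp add: mult.commute)
  then have "SW v n Y \<le> 2 * real k * ?X / eps"
    using assms by (simp add: pos_le_divide_eq)
  then show "SW v n Y \<le> 2 / eps * real k * real n powr (1 / real k) * SW v n y"
    by (simp add: mult.assoc)
qed

end
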